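(* Let $H(\theta):=\{\mathbb E[Y^\alpha]:Y\in\arg\max_{Y\in\mathcal Y}\mathbb E[F(Y;\theta)]\}$, which for $\theta\neq\underline\theta$ is a singleton identified with its element. Then $\theta\mapsto H(\theta)$ is non-decreasing on $(\underline\theta,\infty)$, and $H(\theta)=0$ for $\theta<\underline\theta$.
   Context: Let $B$ be a one-dimensional standard Brownian motion on a complete probability space $(\Omega,\mathcal F,\mathbb P)$ with augmented natural filtration $(\mathcal F_t)$. Constants $\mu,r\in\mathbb R$, $\sigma>0$, $\phi:=(\mu-r)/\sigma\neq0$; pricing kernel $Z_t=\exp(-\phi B_t-(r+\phi^2/2)t)$. Fix $\tau>0$, $\alpha\in(0,1)$, $k\ge0$, $\gamma>0$. $U(x)=x^\alpha$ for $x\ge0$, $U(x)=-k|x|^\alpha$ for $x<0$. $\mathcal Y$ is the set of $\mathcal F_\tau$-measurable $Y\ge0$ with $\mathbb E[Z_\tau Y]\le1$. $F(y;\theta):=U(y-\gamma)+\theta y^\alpha$, $\underline\theta:=-(1+k^{1/(1-\alpha)})^{1-\alpha}$. For every $\theta$ the maximum of $\mathbb E[F(Y;\theta)]$ over $\mathcal Y$ is attained. *)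

theory Defs
  imports "HOL-Probability.Probability"
begin

text \<open>Standard one-dimensional Brownian motion B on the probability space M
  (time index t \<ge> 0; values at negative times are irrelevant).\<close>
definition std_brownian_motion :: "'a measure \<Rightarrow> (real \<Rightarrow> 'a \<Rightarrow> real) \<Rightarrow> bool" where
  "std_brownian_motion M B \<longleftrightarrow>
     prob_space M \<and>
     (\<forall>t\<ge>0. B t \<in> borel_measurable M) \<and>
     (\<forall>\<omega>\<in>space M. B 0 \<omega> = 0) \<and>
     (AE \<omega> in M. continuous_on {0..} (\<lambda>t. B t \<omega>)) \<and>
     (\<forall>s t. 0 \<le> s \<and> s < t \<longrightarrow>
        distributed M lborel (\<lambda>\<omega>. B t \<omega> - B s \<omega>) (normal_density 0 (sqrt (t - s)))) \<and>
     (\<forall>(n::nat) (ts::nat \<Rightarrow> real). 0 \<le> ts 0 \<and> (\<forall>i<n. ts i < ts (Suc i)) \<longrightarrow>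
        prob_space.indep_vars M (\<lambda>_. borel) (\<lambda>i \<omega>. B (ts (Suc i)) \<omega> - B (ts i) \<omega>) {..<n})"

definition aug_filtration :: "'a measure \<Rightarrow> (real \<Rightarrow> 'a \<Rightarrow> real) \<Rightarrow> real \<Rightarrow> 'a measure" where
  "aug_filtration M B t = sigma (space M)
     ({B s -` A \<inter> space M | s A. 0 \<le> s \<and> s \<le> t \<and> A \<in> sets borel} \<union> null_sets M)"

definition pricing_kernel :: "(real \<Rightarrow> 'a \<Rightarrow> real) \<Rightarrow> real \<Rightarrow> real \<Rightarrow> real \<Rightarrow> 'a \<Rightarrow> real" where
  "pricing_kernel B \<phi> r t \<omega> = exp (- \<phi> * B t \<omega> - (r + \<phi>\<^sup>2 / 2) * t)"

definition admissible :: "'a measure \<Rightarrow> (real \<Rightarrow> 'a \<Rightarrow> real) \<Rightarrow> real \<Rightarrow> real \<Rightarrow> real \<Rightarrow> ('a \<Rightarrow> real) set" where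
  "admissible M B \<phi> r \<tau> = {Y. Y \<in> borel_measurable (aug_filtration M B \<tau>) \<and>
      (\<forall>\<omega>\<in>space M. 0 \<le> Y \<omega>) \<and>
      (\<integral>\<^sup>+ \<omega>. ennreal (pricing_kernel B \<phi> r \<tau> \<omega> * Y \<omega>) \<partial>M) \<le> 1}"

definition U :: "real \<Rightarrow> real \<Rightarrow> real \<Rightarrow> real" where
  "U \<alpha> k x = (if 0 \<le> x then x powr \<alpha> else - k * \<bar>x\<bar> powr \<alpha>)"

definition Fobj :: "real \<Rightarrow> real \<Rightarrow> real \<Rightarrow> real \<Rightarrow> real \<Rightarrow> real" where
  "Fobj \<alpha> k \<gamma> \<theta> y = U \<alpha> k (y - \<gamma>) + \<theta> * y powr \<alpha>"

definition theta_low :: "real \<Rightarrow> real \<Rightarrow> real" where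
  "theta_low \<alpha> k = - ((1 + k powr (1 / (1 - \<alpha>))) powr (1 - \<alpha>))"

definition argmax_set :: "'a measure \<Rightarrow> (real \<Rightarrow> 'a \<Rightarrow> real) \<Rightarrow> real \<Rightarrow> real \<Rightarrow> real
    \<Rightarrow> real \<Rightarrow> real \<Rightarrow> real \<Rightarrow> real \<Rightarrow> ('a \<Rightarrow> real) set" where
  "argmax_set M B \<phi> r \<tau> \<alpha> k \<gamma> \<theta> =
     {Y \<in> admissible M B \<phi> r \<tau>. \<forall>Y' \<in> admissible M B \<phi> r \<tau>.
        (\<integral>\<omega>. Fobj \<alpha> k \<gamma> \<theta> (Y' \<omega>) \<partial>M) \<le> (\<integral>\<omega>. Fobj \<alpha> k \<gamma> \<theta> (Y \<omega>) \<partial>M)}"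

definition Hset :: "'a measure \<Rightarrow> (real \<Rightarrow> 'a \<Rightarrow> real) \<Rightarrow> real \<Rightarrow> real \<Rightarrow> real
    \<Rightarrow> real \<Rightarrow> real \<Rightarrow> real \<Rightarrow> real \<Rightarrow> real set" where
  "Hset M B \<phi> r \<tau> \<alpha> k \<gamma> \<theta> =
     (\<lambda>Y. \<integral>\<omega>. Y \<omega> powr \<alpha> \<partial>M) ` argmax_set M B \<phi> r \<tau> \<alpha> k \<gamma> \<theta>"

end

theory Submission
  imports Defs
begin

(*
  Since F(y; theta) = F(y; 0) + theta * y^alpha, an optimal payoff for theta1 is feasible for theta2
  and vice versa, and adding the two optimality inequalities gives
  (theta2 - theta1) * (E[Y2^alpha] - E[Y1^alpha]) >= 0.

  For theta1 = theta2 > theta_low the optimum must be shown to be a.s. unique.  The pointwise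
  Lagrangian y |-> F(y) - t * y has a largest maximiser ymax t, antitone in t, and the maximiser is
  unique wherever ymax is continuous, i.e. outside a countable set, which l * Z avoids a.s. because
  Z has no atoms.  The cost l |-> E[Z * ymax (l * Z)] is therefore continuous, so either it equals 1
  for some multiplier l, and then every optimum equals ymax (l * Z) a.s., or it stays below 1, and
  then every optimum is a.s. a global maximiser of F(.; theta), which is unique for theta > theta_low.

  Finally Hoelder's inequality gives F(y; theta) <= F(0; theta) + (theta - theta_low) * y^alpha, so for
  theta < theta_low comparing an optimum with the payoff 0 forces E[Y^alpha] = 0.
*)

section \<open>Inequalities for real powers\<close>

lemma powr_le_tangent:
  fixes a u x :: real
  assumes "0 < a" "a < 1" "0 < u" "0 \<le> x"
  shows "x powr a \<le> a * u powr (a - 1) * x + (1 - a) * u powr a"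
proof (cases "x = 0")
  case True
  then show ?thesis using assms by simp
next
  case False
  then have x: "x > 0" using assms by simp
  have "(x / u) powr a * 1 powr (1 - a) \<le> a * (x / u) + (1 - a) * 1"
    by (rule Youngs_inequality_0) (use assms x in auto)
  then have "(x / u) powr a * u powr a \<le> (a * (x / u) + (1 - a)) * u powr a"
    by (intro mult_right_mono) auto
  moreover have "(x / u) powr a * u powr a = x powr a"
    using assms x by (simp add: powr_divide)
  moreover have "(a * (x / u) + (1 - a)) * u powr a = a * u powr (a - 1) * x + (1 - a) * u powr a"
    using assms by (simp add: powr_diff field_simps)
  ultimately show ?thesis by simp
qed

lemma powr_add_le:
  fixes a x y :: real
  assumes "0 < a" "a \<le> 1" "0 \<le> x" "0 \<le> y"
  shows "(x + y) powr a \<le> x powr a + y powr a"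
proof (cases "x + y = 0")
  case True then show ?thesis using assms by simp
next
  case False
  then have s: "x + y > 0" using assms by simp
  have "x / (x + y) \<le> (x / (x + y)) powr a" "y / (x + y) \<le> (y / (x + y)) powr a"
    using powr_mono'[of a 1 "x / (x + y)"] powr_mono'[of a 1 "y / (x + y)"] assms s
    by (simp_all add: divide_le_eq_1)
  moreover have "x / (x + y) + y / (x + y) = 1"
    using s by (simp add: add_divide_distrib[symmetric])
  ultimately have "(x + y) powr a * 1 \<le> (x + y) powr a * ((x / (x + y)) powr a + (y / (x + y)) powr a)"
    by (intro mult_left_mono) auto
  also have "\<dots> = x powr a + y powr a"
    using s assms by (simp add: powr_divide distrib_left)
  finally show ?thesis by simp
qed

lemma mult_le_powr_iff:
  fixes a t y c :: real
  assumes a: "0 < a" "a < 1" and "0 < t" "0 < y" "0 < c"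
  shows "t * y \<le> c * y powr a \<longleftrightarrow> y \<le> (c / t) powr (1 / (1 - a))"
proof -
  have "y = y powr (1 - a) * y powr a" using assms by (simp add: powr_add[symmetric])
  then have "t * y \<le> c * y powr a \<longleftrightarrow> t * y powr (1 - a) * y powr a \<le> c * y powr a"
    by (metis mult.assoc)
  also have "\<dots> \<longleftrightarrow> y powr (1 - a) \<le> c / t"
    using assms by (simp add: pos_le_divide_eq mult.commute)
  also have "\<dots> \<longleftrightarrow> (y powr (1 - a)) powr (1 / (1 - a)) \<le> (c / t) powr (1 / (1 - a))"
    using assms powr_mono2[of "1 / (1 - a)" "y powr (1 - a)" "c / t"]
      powr_less_mono2[of "1 / (1 - a)" "c / t" "y powr (1 - a)"] by (auto simp: not_le[symmetric])
  also have "(y powr (1 - a)) powr (1 / (1 - a)) = y"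
    using assms by (simp add: powr_powr)
  finally show ?thesis .
qed

lemma mult_powr_divide:
  fixes w b a :: real
  assumes "0 < w" "0 \<le> b"
  shows "w * (b / w) powr a = w powr (1 - a) * b powr a"
  using assms by (simp add: powr_divide powr_diff)

text \<open>Hoelder's inequality for two terms: both powers are bounded by the tangent of
  \<open>x \<mapsto> x powr \<alpha>\<close> at the point where equality holds.\<close>
lemma powr_add_weighted_le:
  fixes a b w \<alpha> :: real
  assumes \<alpha>: "0 < \<alpha>" "\<alpha> < 1" and ab: "0 \<le> a" "0 \<le> b" and w: "0 < w"
  shows "a powr \<alpha> + w powr (1 - \<alpha>) * b powr \<alpha> \<le> (1 + w) powr (1 - \<alpha>) * (a + b) powr \<alpha>"
proof (cases "a + b = 0")
  case True
  with ab have "a = 0" "b = 0" by linarith+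
  then show ?thesis by simp
next
  case False
  define u where "u = (a + b) / (1 + w)"
  have u: "0 < u" "a + b = (1 + w) * u"
    using ab w False by (simp_all add: u_def)
  have tangent_a: "a powr \<alpha> \<le> \<alpha> * u powr (\<alpha> - 1) * a + (1 - \<alpha>) * u powr \<alpha>"
    by (rule powr_le_tangent[OF \<alpha> u(1) ab(1)])
  have "w * (b / w) powr \<alpha> \<le> w * (\<alpha> * u powr (\<alpha> - 1) * (b / w) + (1 - \<alpha>) * u powr \<alpha>)"
    using powr_le_tangent[OF \<alpha> u(1), of "b / w"] ab w by (intro mult_left_mono) auto
  also have "w * (\<alpha> * u powr (\<alpha> - 1) * (b / w) + (1 - \<alpha>) * u powr \<alpha>)
      = \<alpha> * u powr (\<alpha> - 1) * b + w * (1 - \<alpha>) * u powr \<alpha>"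
    using w by (simp add: field_simps)
  finally have "w powr (1 - \<alpha>) * b powr \<alpha> \<le> \<alpha> * u powr (\<alpha> - 1) * b + w * (1 - \<alpha>) * u powr \<alpha>"
    by (simp only: mult_powr_divide[OF w ab(2)])
  with tangent_a have "a powr \<alpha> + w powr (1 - \<alpha>) * b powr \<alpha>
      \<le> \<alpha> * (u powr (\<alpha> - 1) * (a + b)) + (1 + w) * (1 - \<alpha>) * u powr \<alpha>"
    by (simp add: distrib_left distrib_right)
  also have "u powr (\<alpha> - 1) * (a + b) = (1 + w) * u powr \<alpha>"
    using u by (simp add: powr_diff field_simps)
  also have "\<alpha> * ((1 + w) * u powr \<alpha>) + (1 + w) * (1 - \<alpha>) * u powr \<alpha> = (1 + w) * u powr \<alpha>"
    by (simp add: algebra_simps)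
  also have "\<dots> = (1 + w) powr (1 - \<alpha>) * (a + b) powr \<alpha>"
    using ab w by (simp add: u_def powr_divide powr_diff)
  finally show ?thesis .
qed

lemma powr_add_weighted_eq:
  fixes b w \<alpha> :: real
  assumes "0 \<le> b" "0 < w"
  shows "(b / w) powr \<alpha> + w powr (1 - \<alpha>) * b powr \<alpha> = (1 + w) powr (1 - \<alpha>) * (b / w + b) powr \<alpha>"
proof -
  have "b / w + b = (1 + w) * (b / w)"
    using assms by (simp add: field_simps)
  then have "(b / w + b) powr \<alpha> = (1 + w) powr \<alpha> * (b / w) powr \<alpha>"
    using assms by (simp only: powr_mult add_nonneg_nonneg divide_nonneg_pos less_imp_le zero_le_one)
  moreover have "(1 + w) powr (1 - \<alpha>) * (1 + w) powr \<alpha> = 1 + w"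
    using assms by (simp add: powr_add[symmetric])
  ultimately have "(1 + w) powr (1 - \<alpha>) * (b / w + b) powr \<alpha> = (1 + w) * (b / w) powr \<alpha>"
    by (metis mult.assoc)
  also have "\<dots> = (b / w) powr \<alpha> + w powr (1 - \<alpha>) * b powr \<alpha>"
    using mult_powr_divide[OF assms(2,1)] by (simp add: algebra_simps)
  finally show ?thesis ..
qed

section \<open>The pointwise Lagrangian problem\<close>

locale power_growth =
  fixes F :: "real \<Rightarrow> real" and \<alpha> C :: real
  assumes alpha: "0 < \<alpha>" "\<alpha> < 1" and C_pos: "0 < C"
    and continuous_F: "continuous_on UNIV F"
    and growth: "\<And>y. 0 \<le> y \<Longrightarrow> F y \<le> F 0 + C * y powr \<alpha>"
begin

definition lagr_argmax :: "real \<Rightarrow> real set" where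
  "lagr_argmax t = {y. 0 \<le> y \<and> (\<forall>x\<ge>0. F x - t * x \<le> F y - t * y)}"

definition ymax :: "real \<Rightarrow> real" where
  "ymax t = Sup (lagr_argmax t)"

lemma lagr_argmax_le:
  assumes t: "0 < t" and y: "y \<in> lagr_argmax t"
  shows "y \<le> (C / t) powr (1 / (1 - \<alpha>))"
proof (cases "y = 0")
  case False
  with y have "0 < y" "F 0 - t * 0 \<le> F y - t * y" by (auto simp: lagr_argmax_def)
  with growth[of y] have "t * y \<le> C * y powr \<alpha>" by simp
  with \<open>0 < y\<close> show ?thesis
    using mult_le_powr_iff[OF alpha t _ C_pos] by simp
qed simp

lemma lagr_argmax_nonempty:
  assumes t: "0 < t"
  shows "lagr_argmax t \<noteq> {}"
proof -
  define b where "b = (C / t) powr (1 / (1 - \<alpha>))"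
  have b: "0 < b" using t C_pos by (simp add: b_def)
  let ?G = "\<lambda>y. F y - t * y"
  have "continuous_on {0..b} ?G"
    by (intro continuous_intros continuous_on_subset[OF continuous_F]) auto
  then obtain y0 where y0: "y0 \<in> {0..b}" "\<And>y. y \<in> {0..b} \<Longrightarrow> ?G y \<le> ?G y0"
    using continuous_attains_sup[of "{0..b}" ?G] b by auto
  have "?G x \<le> ?G y0" if x: "0 \<le> x" for x
  proof (cases "x \<le> b")
    case False
    with b have "0 < x" by linarith
    with False have "\<not> t * x \<le> C * x powr \<alpha>"
      using mult_le_powr_iff[OF alpha t _ C_pos, of x] by (simp add: b_def)
    then have "?G x < ?G 0" using growth[OF x] by auto
    also have "\<dots> \<le> ?G y0" using y0(2)[of 0] b by auto
    finally show ?thesis by simp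
  qed (use y0 x in auto)
  then have "y0 \<in> lagr_argmax t" using y0 by (auto simp: lagr_argmax_def)
  then show ?thesis by auto
qed

lemma closed_lagr_argmax: "closed (lagr_argmax t)"
proof -
  have "continuous_on UNIV (\<lambda>y. F y - t * y)"
    by (intro continuous_intros continuous_F)
  then have "closed {y. F x - t * x \<le> F y - t * y}" for x
    by (rule closed_Collect_le[OF continuous_on_const])
  moreover have "lagr_argmax t = {0..} \<inter> (\<Inter>x\<in>{0..}. {y. F x - t * x \<le> F y - t * y})"
    unfolding lagr_argmax_def by auto
  ultimately show ?thesis by auto
qed

lemma ymax_in_lagr_argmax: "0 < t \<Longrightarrow> ymax t \<in> lagr_argmax t"
  unfolding ymax_def using lagr_argmax_le
  by (intro closed_contains_Sup lagr_argmax_nonempty closed_lagr_argmax) (auto simp: bdd_above_def)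

lemma ymax_ge: "0 < t \<Longrightarrow> y \<in> lagr_argmax t \<Longrightarrow> y \<le> ymax t"
  unfolding ymax_def using lagr_argmax_le by (intro cSup_upper) (auto simp: bdd_above_def)

lemma ymax_nonneg: "0 < t \<Longrightarrow> 0 \<le> ymax t"
  using ymax_in_lagr_argmax by (auto simp: lagr_argmax_def)

lemma ymax_le: "0 < t \<Longrightarrow> ymax t \<le> (C / t) powr (1 / (1 - \<alpha>))"
  using ymax_in_lagr_argmax lagr_argmax_le by blast

lemma lagr_le_ymax: "0 < t \<Longrightarrow> 0 \<le> x \<Longrightarrow> F x - t * x \<le> F (ymax t) - t * ymax t"
  using ymax_in_lagr_argmax[of t] by (auto simp: lagr_argmax_def)

lemma in_lagr_argmax_iff:
  "0 < t \<Longrightarrow> 0 \<le> y \<Longrightarrow> y \<in> lagr_argmax t \<longleftrightarrow> F (ymax t) - t * ymax t \<le> F y - t * y"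
  using lagr_le_ymax[of t] ymax_in_lagr_argmax[of t] by (force simp: lagr_argmax_def)

lemma lagr_argmax_antimono:
  assumes "s < t" "y \<in> lagr_argmax s" "z \<in> lagr_argmax t"
  shows "z \<le> y"
proof -
  have "F z - s * z \<le> F y - s * y" "F y - t * y \<le> F z - t * z"
    using assms by (auto simp: lagr_argmax_def)
  then have "(t - s) * (z - y) \<le> 0" by (simp add: algebra_simps)
  with \<open>s < t\<close> show ?thesis by (simp add: mult_le_0_iff)
qed

lemma ymax_antimono: "0 < s \<Longrightarrow> s \<le> t \<Longrightarrow> ymax t \<le> ymax s"
  using lagr_argmax_antimono[of s t "ymax s" "ymax t"] ymax_in_lagr_argmax[of s] ymax_in_lagr_argmax[of t]
  by (cases "s = t") auto

text \<open>Maximisers for larger multipliers lie below every maximiser at \<open>t\<close>, and by continuity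
  they approach \<open>ymax t\<close>.\<close>
lemma lagr_argmax_eq_ymax:
  assumes t: "0 < t" and cont: "isCont ymax t" and y: "y \<in> lagr_argmax t"
  shows "y = ymax t"
proof (rule antisym)
  show "y \<le> ymax t" by (rule ymax_ge[OF t y])
  have "(ymax \<longlongrightarrow> ymax t) (at_right t)"
    using cont by (simp add: isCont_def filterlim_at_split)
  moreover have "\<forall>\<^sub>F s in at_right t. ymax s \<le> y"
    using eventually_at_right_less[of t]
  proof eventually_elim
    case (elim s)
    with t y show ?case using lagr_argmax_antimono ymax_in_lagr_argmax[of s] by auto
  qed
  ultimately show "ymax t \<le> y" by (rule tendsto_upperbound) simp
qed

lemma countable_discont_ymax: "countable {t. 0 < t \<and> \<not> isCont ymax t}"
proof -
  have "mono_on {0<..} (\<lambda>t. - ymax t)"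
    by (auto intro!: mono_onI ymax_antimono)
  then have "countable {s \<in> {0<..}. \<not> isCont (\<lambda>x. - ymax x) s}"
    by (intro mono_on_ctble_discont_open) simp
  moreover have "isCont (\<lambda>x. - ymax x) s \<longleftrightarrow> isCont ymax s" for s
    using isCont_minus[where f = ymax and a = s] isCont_minus[where f = "\<lambda>x. - ymax x" and a = s]
    by auto
  ultimately show ?thesis by simp
qed

lemma measurable_ymax:
  assumes f: "f \<in> borel_measurable M" and pos: "\<And>\<omega>. \<omega> \<in> space M \<Longrightarrow> 0 < f \<omega>"
  shows "(\<lambda>\<omega>. ymax (f \<omega>)) \<in> borel_measurable M"
proof -
  have "mono (\<lambda>x. - ymax (exp x))"
    by (auto simp: mono_def intro!: ymax_antimono)
  then have "(\<lambda>x. - (- ymax (exp x))) \<in> borel_measurable borel"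
    by (intro borel_measurable_uminus borel_measurable_mono)
  then have [measurable]: "(\<lambda>x. ymax (exp x)) \<in> borel_measurable borel"
    by simp
  have "(\<lambda>\<omega>. ymax (exp (ln (f \<omega>)))) \<in> borel_measurable M"
    using f by measurable
  then show ?thesis
    by (rule measurable_cong[THEN iffD1, rotated]) (simp add: pos)
qed

end

section \<open>Maximisation under a budget constraint\<close>

locale budget_problem = power_growth F \<alpha> C + prob_space M
  for F \<alpha> C and M :: "'a measure" +
  fixes N :: "'a measure" and Z :: "'a \<Rightarrow> real" and D :: real
  assumes sets_N: "sets N \<subseteq> sets M" and space_N: "space N = space M"
    and Z_measurable: "Z \<in> borel_measurable N"
    and Z_pos: "\<And>\<omega>. \<omega> \<in> space M \<Longrightarrow> 0 < Z \<omega>"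
    and integrable_Z: "integrable M Z"
    and integrable_Z_powr: "integrable M (\<lambda>\<omega>. Z \<omega> powr (- (\<alpha> / (1 - \<alpha>))))"
    and Z_atomless: "\<And>S. countable S \<Longrightarrow> AE \<omega> in M. Z \<omega> \<notin> S"
    and F_bound: "\<And>y. 0 \<le> y \<Longrightarrow> \<bar>F y\<bar> \<le> D * (1 + y powr \<alpha>)"
begin

definition budget_set :: "('a \<Rightarrow> real) set" where
  "budget_set = {Y. Y \<in> borel_measurable N \<and> (\<forall>\<omega>\<in>space M. 0 \<le> Y \<omega>) \<and>
     (\<integral>\<^sup>+\<omega>. ennreal (Z \<omega> * Y \<omega>) \<partial>M) \<le> 1}"

definition optimal :: "('a \<Rightarrow> real) \<Rightarrow> bool" where
  "optimal Y \<longleftrightarrow> Y \<in> budget_set \<and> (\<forall>Y'\<in>budget_set. (\<integral>\<omega>. F (Y' \<omega>) \<partial>M) \<le> (\<integral>\<omega>. F (Y \<omega>) \<partial>M))"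

definition yhat :: "real \<Rightarrow> 'a \<Rightarrow> real" where
  "yhat l \<omega> = ymax (l * Z \<omega>)"

definition cost :: "real \<Rightarrow> real" where
  "cost l = (\<integral>\<omega>. Z \<omega> * yhat l \<omega> \<partial>M)"

lemma measurable_N_imp_M: "f \<in> borel_measurable N \<Longrightarrow> f \<in> borel_measurable M"
  using sets_N space_N unfolding measurable_def by auto

lemma Z_borel [measurable]: "Z \<in> borel_measurable M"
  by (rule measurable_N_imp_M[OF Z_measurable])

lemma F_borel [measurable]: "F \<in> borel_measurable borel"
  by (rule borel_measurable_continuous_onI[OF continuous_F])

lemma budget_setD:
  assumes "Y \<in> budget_set"
  shows "Y \<in> borel_measurable M" "\<And>\<omega>. \<omega> \<in> space M \<Longrightarrow> 0 \<le> Y \<omega>"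
    and "integrable M (\<lambda>\<omega>. Z \<omega> * Y \<omega>)" "(\<integral>\<omega>. Z \<omega> * Y \<omega> \<partial>M) \<le> 1"
proof -
  show Y [measurable]: "Y \<in> borel_measurable M"
    using assms measurable_N_imp_M by (auto simp: budget_set_def)
  show nonneg: "0 \<le> Y \<omega>" if "\<omega> \<in> space M" for \<omega>
    using assms that by (auto simp: budget_set_def)
  have nn: "AE \<omega> in M. 0 \<le> Z \<omega> * Y \<omega>"
    using Z_pos nonneg by (intro AE_I2) (simp add: less_imp_le)
  have le: "(\<integral>\<^sup>+\<omega>. ennreal (Z \<omega> * Y \<omega>) \<partial>M) \<le> 1"
    using assms by (auto simp: budget_set_def)
  show int: "integrable M (\<lambda>\<omega>. Z \<omega> * Y \<omega>)"
    using le nn by (intro integrableI_nonneg) (auto simp: top_unique intro: le_less_trans)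
  have "ennreal (\<integral>\<omega>. Z \<omega> * Y \<omega> \<partial>M) \<le> 1"
    using nn_integral_eq_integral[OF int nn] le by simp
  then show "(\<integral>\<omega>. Z \<omega> * Y \<omega> \<partial>M) \<le> 1"
    by (simp add: ennreal_le_1)
qed

text \<open>Young's inequality with the weight \<open>Z\<close>; it makes \<open>Y\<^sup>\<alpha>\<close> integrable for every
  affordable \<open>Y\<close>.\<close>
lemma powr_le_Z_mult:
  assumes "\<omega> \<in> space M" "0 \<le> y"
  shows "y powr \<alpha> \<le> \<alpha> * (Z \<omega> * y) + (1 - \<alpha>) * Z \<omega> powr (- (\<alpha> / (1 - \<alpha>)))"
proof -
  have Z: "0 < Z \<omega>" using Z_pos assms by auto
  let ?u = "Z \<omega> powr (- (1 / (1 - \<alpha>)))"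
  have "?u powr (\<alpha> - 1) = Z \<omega> powr (- (1 / (1 - \<alpha>)) * (\<alpha> - 1))"
    by (simp add: powr_powr)
  also have "- (1 / (1 - \<alpha>)) * (\<alpha> - 1) = 1" using alpha by (simp add: field_simps)
  finally have u1: "?u powr (\<alpha> - 1) = Z \<omega>" using Z by simp
  have "?u powr \<alpha> = Z \<omega> powr (- (1 / (1 - \<alpha>)) * \<alpha>)"
    by (simp add: powr_powr)
  also have "- (1 / (1 - \<alpha>)) * \<alpha> = - (\<alpha> / (1 - \<alpha>))" using alpha by (simp add: field_simps)
  finally have u2: "?u powr \<alpha> = Z \<omega> powr (- (\<alpha> / (1 - \<alpha>)))" .
  show ?thesis
    using powr_le_tangent[OF alpha _ assms(2), of ?u] Z u1 u2 by (simp add: mult.assoc)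
qed

lemma integrable_powr_and_F:
  assumes Y [measurable]: "Y \<in> borel_measurable M" and nonneg: "\<And>\<omega>. \<omega> \<in> space M \<Longrightarrow> 0 \<le> Y \<omega>"
    and ZY: "integrable M (\<lambda>\<omega>. Z \<omega> * Y \<omega>)"
  shows "integrable M (\<lambda>\<omega>. Y \<omega> powr \<alpha>)" "integrable M (\<lambda>\<omega>. F (Y \<omega>))"
proof -
  have "integrable M (\<lambda>\<omega>. \<alpha> * (Z \<omega> * Y \<omega>) + (1 - \<alpha>) * Z \<omega> powr (- (\<alpha> / (1 - \<alpha>))))"
    using ZY integrable_Z_powr by (intro Bochner_Integration.integrable_add integrable_mult_right)
  then show powr: "integrable M (\<lambda>\<omega>. Y \<omega> powr \<alpha>)"
    by (rule Bochner_Integration.integrable_bound)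
      (use alpha Z_pos nonneg powr_le_Z_mult in \<open>auto intro!: AE_I2 simp: less_imp_le\<close>)
  have "integrable M (\<lambda>\<omega>. D * (1 + Y \<omega> powr \<alpha>))"
    using powr by (intro integrable_mult_right Bochner_Integration.integrable_add) auto
  then show "integrable M (\<lambda>\<omega>. F (Y \<omega>))"
    by (rule Bochner_Integration.integrable_bound)
      (use F_bound nonneg in \<open>auto intro!: AE_I2 intro: order_trans[OF _ abs_ge_self]\<close>)
qed

lemma budget_set_integrable:
  assumes "Y \<in> budget_set"
  shows "integrable M (\<lambda>\<omega>. Y \<omega> powr \<alpha>)" "integrable M (\<lambda>\<omega>. F (Y \<omega>))"
  using integrable_powr_and_F budget_setD[OF assms] by auto

lemma yhat_measurable_N: "0 < l \<Longrightarrow> yhat l \<in> borel_measurable N"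
  unfolding yhat_def using Z_measurable Z_pos space_N by (intro measurable_ymax) auto

lemma yhat_borel [measurable]: "0 < l \<Longrightarrow> yhat l \<in> borel_measurable M"
  by (rule measurable_N_imp_M[OF yhat_measurable_N])

lemma yhat_nonneg: "0 < l \<Longrightarrow> \<omega> \<in> space M \<Longrightarrow> 0 \<le> yhat l \<omega>"
  using ymax_nonneg Z_pos by (simp add: yhat_def)

lemma yhat_antimono: "0 < l1 \<Longrightarrow> l1 \<le> l2 \<Longrightarrow> \<omega> \<in> space M \<Longrightarrow> yhat l2 \<omega> \<le> yhat l1 \<omega>"
  unfolding yhat_def using Z_pos by (intro ymax_antimono) auto

lemma Z_yhat_le:
  assumes l: "0 < l" and \<omega>: "\<omega> \<in> space M"
  shows "Z \<omega> * yhat l \<omega> \<le> (C / l) powr (1 / (1 - \<alpha>)) * Z \<omega> powr (- (\<alpha> / (1 - \<alpha>)))"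
proof -
  have Z: "0 < Z \<omega>" using Z_pos \<omega> by auto
  have "Z \<omega> * yhat l \<omega> \<le> Z \<omega> * (C / (l * Z \<omega>)) powr (1 / (1 - \<alpha>))"
    unfolding yhat_def using l Z ymax_le[of "l * Z \<omega>"] by simp
  also have "\<dots> = (C / l) powr (1 / (1 - \<alpha>)) * (Z \<omega> powr 1 * Z \<omega> powr (- (1 / (1 - \<alpha>))))"
    using Z l C_pos by (simp add: powr_divide powr_mult powr_minus_divide)
  also have "Z \<omega> powr 1 * Z \<omega> powr (- (1 / (1 - \<alpha>))) = Z \<omega> powr (- (\<alpha> / (1 - \<alpha>)))"
    unfolding powr_add[symmetric] using alpha by (simp add: field_simps)
  finally show ?thesis .
qed

lemma integrable_Z_yhat: "0 < l \<Longrightarrow> integrable M (\<lambda>\<omega>. Z \<omega> * yhat l \<omega>)"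
  using integrable_mult_right[OF integrable_Z_powr, of "(C / l) powr (1 / (1 - \<alpha>))"]
  by (rule Bochner_Integration.integrable_bound)
    (use Z_pos yhat_nonneg Z_yhat_le in \<open>auto intro!: AE_I2 simp: less_imp_le\<close>)

lemma integrable_F_yhat: "0 < l \<Longrightarrow> integrable M (\<lambda>\<omega>. F (yhat l \<omega>))"
  using integrable_powr_and_F(2) yhat_nonneg integrable_Z_yhat by auto

lemma yhat_in_budget_set:
  assumes l: "0 < l" and affordable: "cost l \<le> 1"
  shows "yhat l \<in> budget_set"
proof -
  have "AE \<omega> in M. 0 \<le> Z \<omega> * yhat l \<omega>"
    using Z_pos yhat_nonneg[OF l] by (intro AE_I2) (simp add: less_imp_le)
  then have "(\<integral>\<^sup>+\<omega>. ennreal (Z \<omega> * yhat l \<omega>) \<partial>M) = ennreal (cost l)"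
    unfolding cost_def by (rule nn_integral_eq_integral[OF integrable_Z_yhat[OF l]])
  then show ?thesis
    unfolding budget_set_def using yhat_measurable_N[OF l] yhat_nonneg[OF l] affordable by auto
qed

lemma AE_isCont_yhat:
  assumes l: "0 < l"
  shows "AE \<omega> in M. isCont ymax (l * Z \<omega>)"
proof -
  have "countable ((\<lambda>t. t / l) ` {t. 0 < t \<and> \<not> isCont ymax t})"
    using countable_discont_ymax by simp
  from Z_atomless[OF this] AE_space show ?thesis
  proof eventually_elim
    case (elim \<omega>)
    have "l * Z \<omega> \<notin> {t. 0 < t \<and> \<not> isCont ymax t}"
    proof
      assume "l * Z \<omega> \<in> {t. 0 < t \<and> \<not> isCont ymax t}"
      then have "l * Z \<omega> / l \<in> (\<lambda>t. t / l) ` {t. 0 < t \<and> \<not> isCont ymax t}"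
        by (rule imageI)
      with elim l show False by simp
    qed
    with elim l Z_pos show ?case by auto
  qed
qed

lemma eventually_cost_less_1: "\<forall>\<^sub>F l in at_top. cost l < 1"
proof -
  define E where "E = (\<integral>\<omega>. Z \<omega> powr (- (\<alpha> / (1 - \<alpha>))) \<partial>M)"
  have "((\<lambda>l. C / l) \<longlongrightarrow> 0) at_top"
    by (intro tendsto_divide_0[OF tendsto_const] filterlim_at_top_imp_at_infinity[OF filterlim_ident])
  then have "((\<lambda>l. (C / l) powr (1 / (1 - \<alpha>))) \<longlongrightarrow> 0) at_top"
    by (rule tendsto_zero_powrI[where b = "1 / (1 - \<alpha>)"])
      (use alpha C_pos in \<open>auto intro: eventually_at_top_linorderI[of 0]\<close>)
  then have "((\<lambda>l. (C / l) powr (1 / (1 - \<alpha>)) * E) \<longlongrightarrow> 0 * E) at_top"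
    by (intro tendsto_mult tendsto_const)
  then have "\<forall>\<^sub>F l in at_top. (C / l) powr (1 / (1 - \<alpha>)) * E < 1"
    by (intro order_tendstoD(2)) auto
  then show ?thesis
    using eventually_gt_at_top[of 0]
  proof eventually_elim
    case (elim l)
    have "cost l \<le> (\<integral>\<omega>. (C / l) powr (1 / (1 - \<alpha>)) * Z \<omega> powr (- (\<alpha> / (1 - \<alpha>))) \<partial>M)"
      unfolding cost_def using Z_yhat_le[OF elim(2)] integrable_Z_powr
      by (intro integral_mono integrable_Z_yhat[OF elim(2)] integrable_mult_right) auto
    with elim(1) show ?case by (simp add: E_def)
  qed
qed

lemma cost_tendsto:
  assumes l: "0 < l" and s: "\<And>n. l / 2 \<le> s n" "s \<longlonglongrightarrow> l"
  shows "(\<lambda>n. cost (s n)) \<longlonglongrightarrow> cost l"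
  unfolding cost_def
proof (rule integral_dominated_convergence[where w = "\<lambda>\<omega>. Z \<omega> * yhat (l / 2) \<omega>"])
  have s_pos: "0 < s n" for n
    using s(1)[of n] l by linarith
  show "(\<lambda>\<omega>. Z \<omega> * yhat l \<omega>) \<in> borel_measurable M"
    using l by measurable
  show "(\<lambda>\<omega>. Z \<omega> * yhat (s n) \<omega>) \<in> borel_measurable M" for n
    using s_pos[of n] by measurable
  show "integrable M (\<lambda>\<omega>. Z \<omega> * yhat (l / 2) \<omega>)"
    using l by (intro integrable_Z_yhat) simp
  show "AE \<omega> in M. (\<lambda>n. Z \<omega> * yhat (s n) \<omega>) \<longlonglongrightarrow> Z \<omega> * yhat l \<omega>"
    using AE_isCont_yhat[OF l]
  proof eventually_elim
    case (elim \<omega>)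
    have "(\<lambda>n. ymax (s n * Z \<omega>)) \<longlonglongrightarrow> ymax (l * Z \<omega>)"
      by (rule isCont_tendsto_compose[OF elim]) (intro tendsto_mult s(2) tendsto_const)
    then show ?case
      unfolding yhat_def by (intro tendsto_mult tendsto_const)
  qed
  show "AE \<omega> in M. norm (Z \<omega> * yhat (s n) \<omega>) \<le> Z \<omega> * yhat (l / 2) \<omega>" for n
    using Z_pos yhat_nonneg[OF s_pos] yhat_antimono[of "l / 2" "s n"] l s(1)
    by (intro AE_I2) (simp add: less_imp_le)
qed

lemma isCont_cost:
  assumes l: "0 < l"
  shows "isCont cost l"
proof -
  have "(cost \<longlongrightarrow> cost l) (at_left l)"
  proof (rule tendsto_at_left_sequentially[of "l / 2"])
    fix S :: "nat \<Rightarrow> real" assume "\<And>n. l / 2 < S n" "S \<longlonglongrightarrow> l"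
    then show "(\<lambda>n. cost (S n)) \<longlonglongrightarrow> cost l"
      by (intro cost_tendsto l less_imp_le)
  qed (use l in simp)
  moreover have "(cost \<longlongrightarrow> cost l) (at_right l)"
  proof (rule tendsto_at_right_sequentially[of _ "l + 1"])
    fix S :: "nat \<Rightarrow> real" assume S: "\<And>n. l < S n" "S \<longlonglongrightarrow> l"
    have "l / 2 \<le> S n" for n
      using S(1)[of n] l by linarith
    with S(2) show "(\<lambda>n. cost (S n)) \<longlonglongrightarrow> cost l"
      by (intro cost_tendsto l)
  qed simp
  ultimately show ?thesis
    by (simp add: isCont_def filterlim_at_split)
qed

lemma cost_eq_1_exists:
  assumes l0: "0 < l0" "1 \<le> cost l0"
  obtains l where "0 < l" "cost l = 1"
proof -
  obtain L where L: "\<And>l. L \<le> l \<Longrightarrow> cost l < 1"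
    using eventually_cost_less_1 by (auto simp: eventually_at_top_linorder)
  have "cost (max L l0) \<le> 1" "l0 \<le> max L l0"
    using L[of "max L l0"] by auto
  moreover have "isCont cost x" if "l0 \<le> x" for x
    using l0 that by (intro isCont_cost) simp
  ultimately obtain l where "l0 \<le> l" "cost l = 1"
    using IVT2[of cost "max L l0" 1 l0] l0 by blast
  then show ?thesis
    using l0 by (intro that[of l]) auto
qed

lemma optimal_AE_lagr_max:
  assumes l: "0 < l" and binding: "cost l = 1" and Y: "optimal Y"
  shows "AE \<omega> in M. F (yhat l \<omega>) - l * Z \<omega> * yhat l \<omega> \<le> F (Y \<omega>) - l * Z \<omega> * Y \<omega>"
proof -
  have YB: "Y \<in> budget_set"
    using Y by (simp add: optimal_def)
  define gap where
    "gap \<omega> = (F (yhat l \<omega>) - l * (Z \<omega> * yhat l \<omega>)) - (F (Y \<omega>) - l * (Z \<omega> * Y \<omega>))" for \<omega>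
  have gap_nonneg: "AE \<omega> in M. 0 \<le> gap \<omega>"
  proof (rule AE_I2)
    fix \<omega> assume "\<omega> \<in> space M"
    with l Z_pos budget_setD(2)[OF YB] show "0 \<le> gap \<omega>"
      using lagr_le_ymax[of "l * Z \<omega>" "Y \<omega>"] by (simp add: gap_def yhat_def algebra_simps)
  qed
  have int: "integrable M (\<lambda>\<omega>. F (yhat l \<omega>))" "integrable M (\<lambda>\<omega>. Z \<omega> * yhat l \<omega>)"
    "integrable M (\<lambda>\<omega>. F (Y \<omega>))" "integrable M (\<lambda>\<omega>. Z \<omega> * Y \<omega>)"
    using integrable_F_yhat[OF l] integrable_Z_yhat[OF l] budget_set_integrable(2)[OF YB]
      budget_setD(3)[OF YB] by auto
  then have int_gap: "integrable M gap"
    unfolding gap_def by (intro Bochner_Integration.integrable_diff integrable_mult_right)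
  have "(\<integral>\<omega>. gap \<omega> \<partial>M) = ((\<integral>\<omega>. F (yhat l \<omega>) \<partial>M) - l * cost l)
      - ((\<integral>\<omega>. F (Y \<omega>) \<partial>M) - l * (\<integral>\<omega>. Z \<omega> * Y \<omega> \<partial>M))"
    unfolding gap_def cost_def using int
    by (simp add: Bochner_Integration.integral_diff Bochner_Integration.integrable_diff)
  also have "\<dots> \<le> 0"
  proof -
    have "(\<integral>\<omega>. F (yhat l \<omega>) \<partial>M) \<le> (\<integral>\<omega>. F (Y \<omega>) \<partial>M)"
      using Y yhat_in_budget_set[OF l] binding by (simp add: optimal_def)
    moreover have "l * (\<integral>\<omega>. Z \<omega> * Y \<omega> \<partial>M) \<le> l * cost l"
      using budget_setD(4)[OF YB] binding l by simp
    ultimately show ?thesis by simp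
  qed
  finally have "AE \<omega> in M. gap \<omega> = 0"
    using integral_nonneg_AE[OF gap_nonneg] integral_nonneg_eq_0_iff_AE[OF int_gap gap_nonneg]
    by simp
  then show ?thesis
    by (rule eventually_mono) (simp add: gap_def algebra_simps)
qed

lemma optimal_AE_eq_yhat:
  assumes l: "0 < l" and binding: "cost l = 1" and Y: "optimal Y"
  shows "AE \<omega> in M. Y \<omega> = yhat l \<omega>"
  using optimal_AE_lagr_max[OF assms] AE_isCont_yhat[OF l] AE_space
proof eventually_elim
  case (elim \<omega>)
  with l Z_pos have "0 < l * Z \<omega>"
    by simp
  moreover have "0 \<le> Y \<omega>"
    using Y elim budget_setD(2) by (simp add: optimal_def)
  ultimately have "Y \<omega> \<in> lagr_argmax (l * Z \<omega>)"
    using elim by (simp add: in_lagr_argmax_iff yhat_def)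
  then show ?case
    using lagr_argmax_eq_ymax \<open>0 < l * Z \<omega>\<close> elim by (simp add: yhat_def)
qed

lemma F_le_optimal_value:
  assumes slack: "\<And>l. 0 < l \<Longrightarrow> cost l < 1" and Y: "optimal Y" and y: "0 \<le> y"
  shows "F y \<le> (\<integral>\<omega>. F (Y \<omega>) \<partial>M)"
proof (rule field_le_epsilon)
  fix e :: real assume e: "0 < e"
  define EZ where "EZ = (\<integral>\<omega>. Z \<omega> \<partial>M)"
  have "0 \<le> EZ"
    unfolding EZ_def using Z_pos by (intro integral_nonneg_AE AE_I2) (simp add: less_imp_le)
  define l where "l = e / (y * EZ + 1)"
  have "0 < y * EZ + 1"
    using y \<open>0 \<le> EZ\<close> by (simp add: add_nonneg_pos)
  then have l: "0 < l" "l * (y * EZ) \<le> e"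
    using e by (simp_all add: l_def field_simps)
  have "F y - l * (y * EZ) = (\<integral>\<omega>. F y - l * y * Z \<omega> \<partial>M)"
    using integrable_Z by (simp add: Bochner_Integration.integral_diff EZ_def prob_space)
  also have "\<dots> \<le> (\<integral>\<omega>. F (yhat l \<omega>) \<partial>M)"
  proof (rule integral_mono)
    show "integrable M (\<lambda>\<omega>. F y - l * y * Z \<omega>)"
      using integrable_Z by (intro Bochner_Integration.integrable_diff integrable_mult_right) auto
    show "integrable M (\<lambda>\<omega>. F (yhat l \<omega>))"
      by (rule integrable_F_yhat[OF l(1)])
    fix \<omega> assume \<omega>: "\<omega> \<in> space M"
    then have "F y - l * Z \<omega> * y \<le> F (yhat l \<omega>) - l * Z \<omega> * yhat l \<omega>"
      using lagr_le_ymax[of "l * Z \<omega>" y] l Z_pos y by (simp add: yhat_def)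
    moreover have "0 \<le> l * Z \<omega> * yhat l \<omega>"
      using yhat_nonneg[OF l(1) \<omega>] l Z_pos[OF \<omega>] by simp
    ultimately show "F y - l * y * Z \<omega> \<le> F (yhat l \<omega>)"
      by (simp add: mult.commute mult.left_commute)
  qed
  also have "\<dots> \<le> (\<integral>\<omega>. F (Y \<omega>) \<partial>M)"
    using Y yhat_in_budget_set[OF l(1)] slack[OF l(1)] by (simp add: optimal_def)
  finally show "F y \<le> (\<integral>\<omega>. F (Y \<omega>) \<partial>M) + e"
    using l(2) by simp
qed

lemma optimal_AE_global_max:
  assumes slack: "\<And>l. 0 < l \<Longrightarrow> cost l < 1" and Y: "optimal Y"
  shows "AE \<omega> in M. \<forall>x\<ge>0. F x \<le> F (Y \<omega>)"
proof -
  have YB: "Y \<in> budget_set"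
    using Y by (simp add: optimal_def)
  define V where "V = (\<integral>\<omega>. F (Y \<omega>) \<partial>M)"
  have FV: "F x \<le> V" if "0 \<le> x" for x
    unfolding V_def by (rule F_le_optimal_value[OF slack Y that])
  have int: "integrable M (\<lambda>\<omega>. V - F (Y \<omega>))"
    using budget_set_integrable(2)[OF YB] by auto
  have "(\<integral>\<omega>. V - F (Y \<omega>) \<partial>M) = 0"
    using budget_set_integrable(2)[OF YB] by (simp add: Bochner_Integration.integral_diff V_def prob_space)
  then have "AE \<omega> in M. V - F (Y \<omega>) = 0"
    using integral_nonneg_eq_0_iff_AE[OF int] FV budget_setD(2)[OF YB] by (auto intro: AE_I2)
  then show ?thesis
    by (rule eventually_mono) (use FV in auto)
qed

theorem optimal_AE_unique:
  assumes unique_max: "\<And>a b. 0 \<le> a \<Longrightarrow> 0 \<le> b \<Longrightarrow> \<forall>x\<ge>0. F x \<le> F a \<Longrightarrow> \<forall>x\<ge>0. F x \<le> F b \<Longrightarrow> a = b"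
    and Y1: "optimal Y1" and Y2: "optimal Y2"
  shows "AE \<omega> in M. Y1 \<omega> = Y2 \<omega>"
proof (cases "\<exists>l>0. 1 \<le> cost l")
  case True
  then obtain l where "0 < l" "cost l = 1"
    using cost_eq_1_exists by blast
  from optimal_AE_eq_yhat[OF this Y1] optimal_AE_eq_yhat[OF this Y2] show ?thesis
    by eventually_elim simp
next
  case False
  then have slack: "\<And>l. 0 < l \<Longrightarrow> cost l < 1"
    by (simp add: not_le)
  have "AE \<omega> in M. \<forall>x\<ge>0. F x \<le> F (Y1 \<omega>)" "AE \<omega> in M. \<forall>x\<ge>0. F x \<le> F (Y2 \<omega>)"
    using optimal_AE_global_max slack Y1 Y2 by blast+
  with AE_space show ?thesis
  proof eventually_elim
    case (elim \<omega>)
    with Y1 Y2 show ?case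
      using unique_max[of "Y1 \<omega>" "Y2 \<omega>"] budget_setD(2) by (auto simp: optimal_def)
  qed
qed

end

section \<open>The S-shaped objective\<close>

locale s_shaped =
  fixes \<alpha> k \<gamma> :: real
  assumes alpha: "0 < \<alpha>" "\<alpha> < 1" and k_nonneg: "0 \<le> k" and gamma_pos: "0 < \<gamma>"
begin

text \<open>\<open>Fobj\<close> with its arguments clamped at \<open>0\<close>, so that it is continuous on the whole line
  (\<open>powr\<close> is meaningless for negative bases); the two agree on \<open>[0, \<infinity>)\<close>.\<close>
definition sobj :: "real \<Rightarrow> real \<Rightarrow> real" where
  "sobj \<theta> y = (max (y - \<gamma>) 0) powr \<alpha> - k * (max (\<gamma> - y) 0) powr \<alpha> + \<theta> * (max y 0) powr \<alpha>"

definition k_hat :: real where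
  "k_hat = k powr (1 / (1 - \<alpha>))"

definition c_hat :: real where
  "c_hat = (1 + k_hat) powr (1 - \<alpha>)"

lemma theta_low_eq: "theta_low \<alpha> k = - c_hat"
  by (simp add: theta_low_def c_hat_def k_hat_def)

lemma k_eq_k_hat_powr: "k = k_hat powr (1 - \<alpha>)"
  unfolding k_hat_def using k_nonneg alpha by (cases "k = 0") (simp_all add: powr_powr)

lemma sobj_eq_Fobj: "0 \<le> y \<Longrightarrow> sobj \<theta> y = Fobj \<alpha> k \<gamma> \<theta> y"
  by (cases "0 \<le> y - \<gamma>") (auto simp: sobj_def Fobj_def U_def max_def)

lemma sobj_gain: "\<gamma> \<le> y \<Longrightarrow> sobj \<theta> y = (y - \<gamma>) powr \<alpha> + \<theta> * y powr \<alpha>"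
  using gamma_pos by (auto simp: sobj_def max_def)

lemma sobj_loss: "0 \<le> y \<Longrightarrow> y \<le> \<gamma> \<Longrightarrow> sobj \<theta> y = - k * (\<gamma> - y) powr \<alpha> + \<theta> * y powr \<alpha>"
  by (auto simp: sobj_def max_def)

lemma sobj_0: "sobj \<theta> 0 = - k * \<gamma> powr \<alpha>"
  using gamma_pos by (simp add: sobj_def max_def)

lemma continuous_sobj: "continuous_on UNIV (sobj \<theta>)"
proof -
  have clamp: "continuous_on UNIV (\<lambda>y. (max (f y) 0) powr \<alpha>)"
    if "continuous_on UNIV f" for f :: "real \<Rightarrow> real"
    by (rule continuous_on_powr') (use alpha that in \<open>auto intro: continuous_on_max\<close>)
  have "continuous_on UNIV (\<lambda>y. y - \<gamma>)" "continuous_on UNIV (\<lambda>y. \<gamma> - y)" "continuous_on UNIV (\<lambda>y. y)"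
    by (intro continuous_intros)+
  from this[THEN clamp] show ?thesis
    unfolding sobj_def[abs_def] by (intro continuous_on_add continuous_on_diff continuous_on_mult_left)
qed

lemma sobj_growth:
  assumes y: "0 \<le> y"
  shows "sobj \<theta> y \<le> sobj \<theta> 0 + (1 + \<bar>\<theta>\<bar> + k) * y powr \<alpha>"
proof -
  have theta: "\<theta> * y powr \<alpha> \<le> \<bar>\<theta>\<bar> * y powr \<alpha>"
    by (intro mult_right_mono) auto
  have expand: "(1 + \<bar>\<theta>\<bar> + k) * y powr \<alpha> = y powr \<alpha> + \<bar>\<theta>\<bar> * y powr \<alpha> + k * y powr \<alpha>"
    by (simp add: algebra_simps)
  show ?thesis
  proof (cases "\<gamma> \<le> y")
    case True
    have "(y - \<gamma>) powr \<alpha> \<le> y powr \<alpha>" "k * \<gamma> powr \<alpha> \<le> k * y powr \<alpha>"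
      using True gamma_pos alpha k_nonneg by (auto intro!: powr_mono2 mult_left_mono)
    with theta show ?thesis
      unfolding sobj_gain[OF True] sobj_0 expand by linarith
  next
    case False
    have "\<gamma> powr \<alpha> \<le> (\<gamma> - y) powr \<alpha> + y powr \<alpha>"
      using powr_add_le[of \<alpha> "\<gamma> - y" y] False y alpha by auto
    then have "k * \<gamma> powr \<alpha> \<le> k * (\<gamma> - y) powr \<alpha> + k * y powr \<alpha>"
      using k_nonneg by (metis distrib_left mult_left_mono)
    moreover have "y \<le> \<gamma>"
      using False by simp
    ultimately show ?thesis
      using theta powr_ge_zero[of y \<alpha>] unfolding sobj_loss[OF y \<open>y \<le> \<gamma>\<close>] sobj_0 expand by linarith
  qed
qed

lemma abs_sobj_le:
  assumes y: "0 \<le> y"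
  shows "\<bar>sobj \<theta> y\<bar> \<le> (1 + \<bar>\<theta>\<bar> + k * \<gamma> powr \<alpha>) * (1 + y powr \<alpha>)"
proof -
  have "0 \<le> k * (max (\<gamma> - y) 0) powr \<alpha>" "\<bar>\<theta> * y powr \<alpha>\<bar> = \<bar>\<theta>\<bar> * y powr \<alpha>"
    using k_nonneg by (simp_all add: abs_mult)
  then have "\<bar>sobj \<theta> y\<bar> \<le> (max (y - \<gamma>) 0) powr \<alpha> + k * (max (\<gamma> - y) 0) powr \<alpha> + \<bar>\<theta>\<bar> * y powr \<alpha>"
    unfolding sobj_def max_absorb1[OF y]
    using abs_ge_self[of "\<theta> * y powr \<alpha>"] abs_ge_minus_self[of "\<theta> * y powr \<alpha>"]
      powr_ge_zero[of "max (y - \<gamma>) 0" \<alpha>]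
    by (intro abs_leI) linarith+
  also have "\<dots> \<le> y powr \<alpha> + k * \<gamma> powr \<alpha> + \<bar>\<theta>\<bar> * y powr \<alpha>"
    using y gamma_pos alpha k_nonneg by (intro add_mono mult_left_mono powr_mono2) auto
  also have "\<dots> \<le> (1 + \<bar>\<theta>\<bar> + k * \<gamma> powr \<alpha>) * (1 + y powr \<alpha>)"
    using k_nonneg by (simp add: algebra_simps)
  finally show ?thesis .
qed

lemma powr_plus_k_powr_le:
  assumes a: "0 \<le> a"
  shows "a powr \<alpha> + k * \<gamma> powr \<alpha> \<le> c_hat * (a + \<gamma>) powr \<alpha>"
proof (cases "k = 0")
  case True
  then show ?thesis
    unfolding c_hat_def k_hat_def using a gamma_pos alpha by (simp add: powr_mono2)
next
  case False
  then have "0 < k_hat"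
    using k_nonneg by (simp add: k_hat_def)
  then have "a powr \<alpha> + k_hat powr (1 - \<alpha>) * \<gamma> powr \<alpha> \<le> (1 + k_hat) powr (1 - \<alpha>) * (a + \<gamma>) powr \<alpha>"
    using alpha a gamma_pos by (intro powr_add_weighted_le) auto
  then show ?thesis
    by (simp only: c_hat_def flip: k_eq_k_hat_powr)
qed

lemma k_le_c_hat: "k \<le> c_hat"
proof -
  have "k_hat powr (1 - \<alpha>) \<le> (1 + k_hat) powr (1 - \<alpha>)"
    using alpha by (intro powr_mono2) (auto simp: k_hat_def)
  then show ?thesis
    by (simp only: c_hat_def flip: k_eq_k_hat_powr)
qed

lemma sobj_le_c_hat:
  assumes y: "0 \<le> y"
  shows "sobj \<theta> y \<le> sobj \<theta> 0 + (\<theta> + c_hat) * y powr \<alpha>"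
proof (cases "\<gamma> \<le> y")
  case True
  then show ?thesis
    using powr_plus_k_powr_le[of "y - \<gamma>"] by (simp add: sobj_gain sobj_0 algebra_simps)
next
  case False
  then have "y \<le> \<gamma>"
    by simp
  have "\<gamma> powr \<alpha> \<le> (\<gamma> - y) powr \<alpha> + y powr \<alpha>"
    using powr_add_le[of \<alpha> "\<gamma> - y" y] False y alpha by auto
  then have "k * \<gamma> powr \<alpha> \<le> k * (\<gamma> - y) powr \<alpha> + k * y powr \<alpha>"
    using k_nonneg by (metis distrib_left mult_left_mono)
  moreover have "k * y powr \<alpha> \<le> c_hat * y powr \<alpha>"
    using k_le_c_hat by (intro mult_right_mono) auto
  ultimately show ?thesis
    unfolding sobj_loss[OF y \<open>y \<le> \<gamma>\<close>] sobj_0 by (simp add: algebra_simps)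
qed

lemma sobj_unbounded:
  assumes \<theta>: "- 1 < \<theta>"
  shows "\<exists>y\<ge>0. b < sobj \<theta> y"
proof -
  define y where "y = max \<gamma> (((\<bar>b\<bar> + \<gamma> powr \<alpha> + 1) / (1 + \<theta>)) powr (1 / \<alpha>))"
  have y: "\<gamma> \<le> y"
    by (simp add: y_def)
  have "(((\<bar>b\<bar> + \<gamma> powr \<alpha> + 1) / (1 + \<theta>)) powr (1 / \<alpha>)) powr \<alpha> \<le> y powr \<alpha>"
    using alpha by (intro powr_mono2) (auto simp: y_def)
  then have "(\<bar>b\<bar> + \<gamma> powr \<alpha> + 1) / (1 + \<theta>) \<le> y powr \<alpha>"
    using alpha \<theta> by (simp add: powr_powr add_pos_nonneg)
  then have big: "\<bar>b\<bar> + \<gamma> powr \<alpha> + 1 \<le> (1 + \<theta>) * y powr \<alpha>"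
    using \<theta> by (simp add: pos_divide_le_eq mult.commute)
  have "y powr \<alpha> \<le> (y - \<gamma>) powr \<alpha> + \<gamma> powr \<alpha>"
    using powr_add_le[of \<alpha> "y - \<gamma>" \<gamma>] y gamma_pos alpha by auto
  then have "(1 + \<theta>) * y powr \<alpha> - \<gamma> powr \<alpha> \<le> sobj \<theta> y"
    using y by (simp add: sobj_gain algebra_simps)
  with big y gamma_pos show ?thesis
    by (intro exI[of _ y]) auto
qed

lemma sobj_beats_0:
  assumes \<theta>: "- c_hat < \<theta>" and k: "0 < k"
  shows "\<exists>y\<ge>0. sobj \<theta> 0 < sobj \<theta> y"
proof -
  have K: "0 < k_hat"
    using k by (simp add: k_hat_def)
  \<comment> \<open>the point where \<open>powr_plus_k_powr_le\<close> is an equality\<close>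
  define y where "y = \<gamma> / k_hat + \<gamma>"
  have y: "\<gamma> \<le> y" "0 < y"
    using K gamma_pos by (auto simp: y_def intro: add_pos_pos)
  have "sobj \<theta> y = (\<gamma> / k_hat) powr \<alpha> + \<theta> * y powr \<alpha>"
    using sobj_gain[OF y(1)] by (simp add: y_def)
  also have "(\<gamma> / k_hat) powr \<alpha> = c_hat * y powr \<alpha> - k * \<gamma> powr \<alpha>"
    using powr_add_weighted_eq[of \<gamma> k_hat \<alpha>] gamma_pos K
    by (simp add: y_def c_hat_def flip: k_eq_k_hat_powr)
  finally have "sobj \<theta> y = sobj \<theta> 0 + (\<theta> + c_hat) * y powr \<alpha>"
    by (simp add: sobj_0 algebra_simps)
  moreover have "0 < (\<theta> + c_hat) * y powr \<alpha>"
    using \<theta> y by simp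
  ultimately show ?thesis
    using y by (intro exI[of _ y]) auto
qed

lemma sobj_beats_gamma:
  assumes \<theta>: "\<theta> < 0"
  shows "\<exists>y\<ge>0. sobj \<theta> \<gamma> < sobj \<theta> y"
proof -
  define K where "K = - \<theta> * \<alpha> * \<gamma> powr (\<alpha> - 1)"
  have K: "0 < K"
    using \<theta> alpha gamma_pos by (simp add: K_def mult_neg_pos)
  define e where "e = ((1 / 2) / K) powr (1 / (1 - \<alpha>))"
  have e: "0 < e"
    using K by (simp add: e_def)
  have "K * e \<le> (1 / 2) * e powr \<alpha>"
    using mult_le_powr_iff[OF alpha K e, of "1 / 2"] by (simp add: e_def)
  moreover have "0 < K * e"
    using K e by simp
  ultimately have small: "K * e < e powr \<alpha>"
    by linarith
  have "(\<gamma> + e) powr \<alpha> \<le> \<alpha> * \<gamma> powr (\<alpha> - 1) * (\<gamma> + e) + (1 - \<alpha>) * \<gamma> powr \<alpha>"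
    using powr_le_tangent[OF alpha gamma_pos, of "\<gamma> + e"] e gamma_pos by simp
  also have "\<dots> = \<gamma> powr \<alpha> + \<alpha> * \<gamma> powr (\<alpha> - 1) * e"
    using gamma_pos by (simp add: powr_diff field_simps)
  finally have "\<theta> * (\<gamma> powr \<alpha> + \<alpha> * \<gamma> powr (\<alpha> - 1) * e) \<le> \<theta> * (\<gamma> + e) powr \<alpha>"
    using \<theta> by (intro mult_left_mono_neg) auto
  then have "sobj \<theta> \<gamma> - K * e \<le> sobj \<theta> (\<gamma> + e) - e powr \<alpha>"
    using e by (simp add: sobj_gain K_def algebra_simps)
  with small e gamma_pos show ?thesis
    by (intro exI[of _ "\<gamma> + e"]) auto
qed

text \<open>On the loss region \<open>sobj \<theta>\<close> lies below its chord between \<open>0\<close> and \<open>\<gamma>\<close>.\<close>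
lemma sobj_le_max_on_loss:
  assumes \<theta>: "\<theta> \<le> 0" and y: "0 \<le> y" "y \<le> \<gamma>"
  shows "sobj \<theta> y \<le> max (sobj \<theta> 0) (sobj \<theta> \<gamma>)"
proof -
  have chord: "s * \<gamma> powr \<alpha> \<le> (s * \<gamma>) powr \<alpha>" if "0 \<le> s" "s \<le> 1" for s
  proof -
    have "s * \<gamma> powr \<alpha> \<le> s powr \<alpha> * \<gamma> powr \<alpha>"
      using powr_mono'[of \<alpha> 1 s] that alpha by (intro mult_right_mono) auto
    also have "\<dots> = (s * \<gamma>) powr \<alpha>"
      using that gamma_pos by (simp add: powr_mult)
    finally show ?thesis .
  qed
  define s where "s = y / \<gamma>"
  have s: "0 \<le> s" "s \<le> 1" "y = s * \<gamma>" "\<gamma> - y = (1 - s) * \<gamma>"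
    using y gamma_pos by (auto simp: s_def field_simps)
  have "- k * (\<gamma> - y) powr \<alpha> \<le> - k * ((1 - s) * \<gamma> powr \<alpha>)"
    using chord[of "1 - s"] s k_nonneg by (simp add: mult_left_mono)
  moreover have "\<theta> * y powr \<alpha> \<le> \<theta> * (s * \<gamma> powr \<alpha>)"
    using chord[of s] s \<theta> by (intro mult_left_mono_neg) auto
  ultimately have "sobj \<theta> y \<le> (1 - s) * sobj \<theta> 0 + s * sobj \<theta> \<gamma>"
    using y by (simp add: sobj_loss sobj_0 sobj_gain algebra_simps)
  also have "\<dots> \<le> (1 - s) * max (sobj \<theta> 0) (sobj \<theta> \<gamma>) + s * max (sobj \<theta> 0) (sobj \<theta> \<gamma>)"
    using s by (intro add_mono mult_left_mono) auto
  also have "\<dots> = max (sobj \<theta> 0) (sobj \<theta> \<gamma>)"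
    by (simp add: algebra_simps)
  finally show ?thesis .
qed

lemma sobj_first_order:
  assumes a: "\<gamma> < a" and max: "\<forall>x\<ge>0. sobj \<theta> x \<le> sobj \<theta> a"
  shows "(a - \<gamma>) powr (\<alpha> - 1) + \<theta> * a powr (\<alpha> - 1) = 0"
proof -
  define G where "G y = (y - \<gamma>) powr \<alpha> + \<theta> * y powr \<alpha>" for y
  have "((\<lambda>y. y powr \<alpha>) has_real_derivative \<alpha> * (a - \<gamma>) powr (\<alpha> - 1)) (at (a - \<gamma>))"
    using a by (intro has_real_derivative_powr) simp
  from DERIV_chain2[OF this DERIV_diff[OF DERIV_ident DERIV_const]]
  have "((\<lambda>y. (y - \<gamma>) powr \<alpha>) has_real_derivative \<alpha> * (a - \<gamma>) powr (\<alpha> - 1)) (at a)"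
    by simp
  moreover have "((\<lambda>y. y powr \<alpha>) has_real_derivative \<alpha> * a powr (\<alpha> - 1)) (at a)"
    using a gamma_pos by (intro has_real_derivative_powr) simp
  ultimately have deriv: "(G has_real_derivative \<alpha> * (a - \<gamma>) powr (\<alpha> - 1) + \<theta> * (\<alpha> * a powr (\<alpha> - 1))) (at a)"
    unfolding G_def by (intro DERIV_add DERIV_cmult)
  have local_max: "G y \<le> G a" if "\<bar>a - y\<bar> < a - \<gamma>" for y
  proof -
    from that have "\<gamma> \<le> y"
      by linarith
    then have "G y = sobj \<theta> y"
      by (simp add: G_def sobj_gain)
    also have "\<dots> \<le> sobj \<theta> a"
      using max \<open>\<gamma> \<le> y\<close> gamma_pos by simp
    also have "\<dots> = G a"
      using a by (simp add: G_def sobj_gain)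
    finally show ?thesis .
  qed
  have "\<alpha> * (a - \<gamma>) powr (\<alpha> - 1) + \<theta> * (\<alpha> * a powr (\<alpha> - 1)) = 0"
    by (rule DERIV_local_max[OF deriv, of "a - \<gamma>"]) (use a local_max in auto)
  then have "\<alpha> * ((a - \<gamma>) powr (\<alpha> - 1) + \<theta> * a powr (\<alpha> - 1)) = 0"
    by (simp add: distrib_left mult.left_commute)
  with alpha show ?thesis
    by simp
qed

theorem sobj_global_max_unique:
  assumes \<theta>: "- c_hat < \<theta>"
    and a: "0 \<le> a" "\<forall>x\<ge>0. sobj \<theta> x \<le> sobj \<theta> a"
    and b: "0 \<le> b" "\<forall>x\<ge>0. sobj \<theta> x \<le> sobj \<theta> b"
  shows "a = b"
proof -
  have "\<theta> \<le> - 1"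
    using sobj_unbounded[of \<theta> "sobj \<theta> a"] a by force
  have "0 < k"
  proof (rule ccontr)
    assume "\<not> 0 < k"
    with k_nonneg have "c_hat = 1"
      unfolding c_hat_def k_hat_def by simp
    with \<theta> \<open>\<theta> \<le> - 1\<close> show False
      by simp
  qed
  obtain y1 where y1: "0 \<le> y1" "sobj \<theta> 0 < sobj \<theta> y1"
    using sobj_beats_0[OF \<theta> \<open>0 < k\<close>] by auto
  obtain y2 where y2: "0 \<le> y2" "sobj \<theta> \<gamma> < sobj \<theta> y2"
    using sobj_beats_gamma[of \<theta>] \<open>\<theta> \<le> - 1\<close> by auto
  have gain: "\<gamma> < c" if c: "0 \<le> c" "\<forall>x\<ge>0. sobj \<theta> x \<le> sobj \<theta> c" for c
  proof (rule ccontr)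
    assume "\<not> \<gamma> < c"
    then have "sobj \<theta> c \<le> max (sobj \<theta> 0) (sobj \<theta> \<gamma>)"
      using sobj_le_max_on_loss \<open>\<theta> \<le> - 1\<close> c by simp
    moreover have "sobj \<theta> y1 \<le> sobj \<theta> c" "sobj \<theta> y2 \<le> sobj \<theta> c"
      using c y1 y2 by auto
    ultimately show False
      using y1(2) y2(2) by (simp add: max_def split: if_splits)
  qed
  \<comment> \<open>the first-order condition pins down the ratio \<open>(c - \<gamma>) / c\<close>\<close>
  have ratio: "(c - \<gamma>) / c = (- \<theta>) powr (1 / (\<alpha> - 1))"
    if c: "0 \<le> c" "\<forall>x\<ge>0. sobj \<theta> x \<le> sobj \<theta> c" for c
  proof -
    have "\<gamma> < c" by (rule gain[OF c])
    then have "(c - \<gamma>) powr (\<alpha> - 1) = - \<theta> * c powr (\<alpha> - 1)"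
      using sobj_first_order[OF _ c(2)] by (simp add: eq_neg_iff_add_eq_0)
    with gamma_pos \<open>\<gamma> < c\<close> have "((c - \<gamma>) / c) powr (\<alpha> - 1) = - \<theta>"
      by (simp add: powr_divide)
    then have "(((c - \<gamma>) / c) powr (\<alpha> - 1)) powr (1 / (\<alpha> - 1)) = (- \<theta>) powr (1 / (\<alpha> - 1))"
      by simp
    with alpha gamma_pos \<open>\<gamma> < c\<close> show ?thesis
      by (simp add: powr_powr)
  qed
  have "\<gamma> < a" "\<gamma> < b"
    using gain a b by auto
  moreover have "(a - \<gamma>) / a = (b - \<gamma>) / b"
    using ratio[OF a] ratio[OF b] by simp
  ultimately have "\<gamma> * b = \<gamma> * a"
    using gamma_pos by (simp add: frac_eq_eq algebra_simps)
  with gamma_pos show ?thesis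
    by simp
qed

end

section \<open>The Black-Scholes pricing kernel\<close>

lemma normal_density_mult_exp:
  fixes s c x :: real
  assumes "0 < s"
  shows "normal_density 0 s x * exp (c * x) = exp (c\<^sup>2 * s\<^sup>2 / 2) * normal_density (c * s\<^sup>2) s x"
proof -
  have "- (x - 0)\<^sup>2 / (2 * s\<^sup>2) + c * x = c\<^sup>2 * s\<^sup>2 / 2 + (- (x - c * s\<^sup>2)\<^sup>2 / (2 * s\<^sup>2))"
    using assms by (simp add: field_simps power2_eq_square)
  then show ?thesis
    unfolding normal_density_def by (simp add: exp_add[symmetric] mult.assoc mult.left_commute)
qed

locale bm_kernel =
  fixes M :: "'a measure" and B :: "real \<Rightarrow> 'a \<Rightarrow> real" and \<tau> \<phi> r :: real
  assumes bm: "std_brownian_motion M B" and tau_pos: "0 < \<tau>" and phi_nonzero: "\<phi> \<noteq> 0"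
begin

abbreviation N :: "'a measure" where
  "N \<equiv> aug_filtration M B \<tau>"

abbreviation Z :: "'a \<Rightarrow> real" where
  "Z \<equiv> pricing_kernel B \<phi> r \<tau>"

sublocale prob_space M
  using bm by (simp add: std_brownian_motion_def)

lemma B_borel [measurable]: "B \<tau> \<in> borel_measurable M"
  using bm tau_pos by (simp add: std_brownian_motion_def)

lemma B_distributed: "distributed M lborel (B \<tau>) (normal_density 0 (sqrt \<tau>))"
proof -
  have "distributed M lborel (\<lambda>\<omega>. B \<tau> \<omega> - B 0 \<omega>) (normal_density 0 (sqrt (\<tau> - 0)))"
    using bm tau_pos unfolding std_brownian_motion_def by blast
  moreover have "distr M lborel (\<lambda>\<omega>. B \<tau> \<omega> - B 0 \<omega>) = distr M lborel (B \<tau>)"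
    using bm by (intro distr_cong) (auto simp: std_brownian_motion_def)
  ultimately show ?thesis
    by (simp add: distributed_def)
qed

lemma integrable_exp_B: "integrable M (\<lambda>\<omega>. exp (c * B \<tau> \<omega>))"
proof -
  have "(\<lambda>x. normal_density 0 (sqrt \<tau>) x * exp (c * x)) =
      (\<lambda>x. exp (c\<^sup>2 * (sqrt \<tau>)\<^sup>2 / 2) * normal_density (c * (sqrt \<tau>)\<^sup>2) (sqrt \<tau>) x)"
    using normal_density_mult_exp[of "sqrt \<tau>"] tau_pos by simp
  moreover have "integrable lborel
      (\<lambda>x. exp (c\<^sup>2 * (sqrt \<tau>)\<^sup>2 / 2) * normal_density (c * (sqrt \<tau>)\<^sup>2) (sqrt \<tau>) x)"
    using tau_pos by (intro integrable_mult_right integrable_normal_density) simp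
  ultimately show ?thesis
    using distributed_integrable[OF B_distributed, of "\<lambda>x. exp (c * x)"] by simp
qed

lemma B_atomless:
  assumes "countable S"
  shows "AE \<omega> in M. B \<tau> \<omega> \<notin> S"
proof -
  have S: "S \<in> null_sets lborel"
    by (rule countable_imp_null_set_lborel[OF assms])
  then have S_borel: "S \<in> sets lborel"
    by auto
  from S have "AE x in lborel. ennreal (normal_density 0 (sqrt \<tau>) x) * indicator S x = 0"
    by (rule AE_not_in[THEN eventually_mono]) simp
  then have "(\<integral>\<^sup>+x. ennreal (normal_density 0 (sqrt \<tau>) x) * indicator S x \<partial>lborel) = 0"
    using S by (subst nn_integral_0_iff_AE) auto
  then have "emeasure M (B \<tau> -` S \<inter> space M) = 0"
    using distributed_emeasure[OF B_distributed S_borel] by simp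
  then have "B \<tau> -` S \<inter> space M \<in> null_sets M"
    using S_borel by (auto intro!: null_setsI)
  then show ?thesis
    by (rule AE_I') auto
qed

lemma sets_N: "sets N \<subseteq> sets M"
  and space_N: "space N = space M"
  and B_measurable_N [measurable]: "B \<tau> \<in> borel_measurable N"
proof -
  let ?G = "{B s -` A \<inter> space M | s A. 0 \<le> s \<and> s \<le> \<tau> \<and> A \<in> sets borel} \<union> null_sets M"
  have G: "?G \<subseteq> sets M"
  proof
    fix X assume "X \<in> ?G"
    then consider s A where "X = B s -` A \<inter> space M" "0 \<le> s" "A \<in> sets borel" | "X \<in> null_sets M"
      by blast
    then show "X \<in> sets M"
    proof cases
      case 1
      with bm have "B s \<in> borel_measurable M"
        by (simp add: std_brownian_motion_def)
      with 1 show ?thesis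
        by (simp add: measurable_sets)
    qed (rule null_setsD2)
  qed
  then have "?G \<subseteq> Pow (space M)"
    using sets.sets_into_space by blast
  then have sets: "sets N = sigma_sets (space M) ?G"
    unfolding aug_filtration_def by (simp add: sets_measure_of_conv)
  with G show "sets N \<subseteq> sets M"
    by (simp add: sets.sigma_sets_subset)
  show space: "space N = space M"
    by (simp add: aug_filtration_def space_measure_of_conv)
  have "B \<tau> -` A \<inter> space M \<in> sets N" if "A \<in> sets borel" for A
    unfolding sets using that tau_pos
    by (intro sigma_sets.Basic UnI1 CollectI exI[of _ \<tau>] exI[of _ A]) auto
  then show "B \<tau> \<in> borel_measurable N"
    by (intro measurableI) (simp_all add: space)
qed

lemma Z_eq: "Z \<omega> = exp (- \<phi> * B \<tau> \<omega> - (r + \<phi>\<^sup>2 / 2) * \<tau>)"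
  by (simp add: pricing_kernel_def)

lemma Z_measurable_N: "Z \<in> borel_measurable N"
  unfolding Z_eq[abs_def] by measurable

lemma Z_pos: "0 < Z \<omega>"
  by (simp add: Z_eq)

lemma integrable_Z_powr: "integrable M (\<lambda>\<omega>. Z \<omega> powr e)"
proof -
  define c where "c = - e * \<phi>"
  have "(\<lambda>\<omega>. Z \<omega> powr e) = (\<lambda>\<omega>. exp (- e * (r + \<phi>\<^sup>2 / 2) * \<tau>) * exp (c * B \<tau> \<omega>))"
    by (simp add: fun_eq_iff Z_eq powr_def exp_add[symmetric] algebra_simps c_def)
  then show ?thesis
    by (simp add: integrable_mult_right integrable_exp_B)
qed

lemma integrable_Z: "integrable M Z"
  using integrable_Z_powr[of 1] Z_pos by (simp add: less_imp_le)

lemma Z_atomless: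
  assumes S: "countable S"
  shows "AE \<omega> in M. Z \<omega> \<notin> S"
proof -
  define h where "h x = exp (- \<phi> * x - (r + \<phi>\<^sup>2 / 2) * \<tau>)" for x
  have "inj h"
    using phi_nonzero by (auto simp: inj_def h_def)
  have "countable (h -` S)"
  proof (rule countable_image_inj_on)
    show "countable (h ` (h -` S))"
      using S by (rule countable_subset[rotated]) auto
    show "inj_on h (h -` S)"
      using \<open>inj h\<close> by (rule inj_on_subset) simp
  qed
  from B_atomless[OF this] show ?thesis
    by (rule eventually_mono) (simp add: Z_eq h_def)
qed

end

section \<open>Monotonicity of \<open>H\<close>\<close>

lemma maximizer_weight_mono:
  fixes J h :: "'b \<Rightarrow> real"
  assumes "x1 \<in> A" "x2 \<in> A" "\<theta>1 < \<theta>2"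
    and max1: "\<And>x. x \<in> A \<Longrightarrow> J x + \<theta>1 * h x \<le> J x1 + \<theta>1 * h x1"
    and max2: "\<And>x. x \<in> A \<Longrightarrow> J x + \<theta>2 * h x \<le> J x2 + \<theta>2 * h x2"
  shows "h x1 \<le> h x2"
proof -
  have "(\<theta>2 - \<theta>1) * (h x1 - h x2) \<le> 0"
    using max1[OF \<open>x2 \<in> A\<close>] max2[OF \<open>x1 \<in> A\<close>] by (simp add: algebra_simps)
  with \<open>\<theta>1 < \<theta>2\<close> show ?thesis
    by (simp add: mult_le_0_iff)
qed

locale s_shaped_market = s_shaped \<alpha> k \<gamma> + bm_kernel M B \<tau> \<phi> r
  for \<alpha> k \<gamma> :: real and M :: "'a measure" and B \<tau> \<phi> r
begin

lemma budget_problem_sobj: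
  "budget_problem (sobj \<theta>) \<alpha> (1 + \<bar>\<theta>\<bar> + k) M N Z (1 + \<bar>\<theta>\<bar> + k * \<gamma> powr \<alpha>)"
proof unfold_locales
  show "0 < 1 + \<bar>\<theta>\<bar> + k"
    using k_nonneg by simp
  show "integrable M (\<lambda>\<omega>. Z \<omega> powr - (\<alpha> / (1 - \<alpha>)))"
    by (rule integrable_Z_powr)
qed (use alpha continuous_sobj sobj_growth sets_N space_N Z_measurable_N Z_pos integrable_Z
    Z_atomless abs_sobj_le in auto)

lemma admissible_eq_budget_set:
  "admissible M B \<phi> r \<tau> = budget_problem.budget_set M N Z"
  by (simp add: admissible_def budget_problem.budget_set_def[OF budget_problem_sobj])

lemma admissibleD:
  assumes "Y \<in> admissible M B \<phi> r \<tau>"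
  shows "\<And>\<omega>. \<omega> \<in> space M \<Longrightarrow> 0 \<le> Y \<omega>"
    and "integrable M (\<lambda>\<omega>. Y \<omega> powr \<alpha>)"
    and "integrable M (\<lambda>\<omega>. Fobj \<alpha> k \<gamma> \<theta> (Y \<omega>))"
proof -
  interpret budget_problem "sobj \<theta>" \<alpha> "1 + \<bar>\<theta>\<bar> + k" M N Z "1 + \<bar>\<theta>\<bar> + k * \<gamma> powr \<alpha>"
    by (rule budget_problem_sobj)
  have Y: "Y \<in> budget_set"
    using assms by (simp add: admissible_eq_budget_set)
  show nonneg: "0 \<le> Y \<omega>" if "\<omega> \<in> space M" for \<omega>
    by (rule budget_setD(2)[OF Y that])
  show "integrable M (\<lambda>\<omega>. Y \<omega> powr \<alpha>)"
    by (rule budget_set_integrable(1)[OF Y])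
  show "integrable M (\<lambda>\<omega>. Fobj \<alpha> k \<gamma> \<theta> (Y \<omega>))"
  proof (rule Bochner_Integration.integrable_cong[THEN iffD1, OF refl _ budget_set_integrable(2)[OF Y]])
    show "sobj \<theta> (Y \<omega>) = Fobj \<alpha> k \<gamma> \<theta> (Y \<omega>)" if "\<omega> \<in> space M" for \<omega>
      using nonneg[OF that] by (rule sobj_eq_Fobj)
  qed
qed

lemma integral_Fobj_split:
  assumes "Y \<in> admissible M B \<phi> r \<tau>"
  shows "(\<integral>\<omega>. Fobj \<alpha> k \<gamma> \<theta> (Y \<omega>) \<partial>M)
    = (\<integral>\<omega>. Fobj \<alpha> k \<gamma> 0 (Y \<omega>) \<partial>M) + \<theta> * (\<integral>\<omega>. Y \<omega> powr \<alpha> \<partial>M)"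
proof -
  have "(\<integral>\<omega>. Fobj \<alpha> k \<gamma> \<theta> (Y \<omega>) \<partial>M) = (\<integral>\<omega>. Fobj \<alpha> k \<gamma> 0 (Y \<omega>) + \<theta> * Y \<omega> powr \<alpha> \<partial>M)"
    by (simp add: Fobj_def)
  also have "\<dots> = (\<integral>\<omega>. Fobj \<alpha> k \<gamma> 0 (Y \<omega>) \<partial>M) + \<theta> * (\<integral>\<omega>. Y \<omega> powr \<alpha> \<partial>M)"
    using admissibleD[OF assms] by simp
  finally show ?thesis .
qed

lemma argmax_set_iff_optimal:
  "Y \<in> argmax_set M B \<phi> r \<tau> \<alpha> k \<gamma> \<theta> \<longleftrightarrow> budget_problem.optimal (sobj \<theta>) M N Z Y"
proof -
  have "(\<integral>\<omega>. Fobj \<alpha> k \<gamma> \<theta> (Y' \<omega>) \<partial>M) = (\<integral>\<omega>. sobj \<theta> (Y' \<omega>) \<partial>M)"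
    if "Y' \<in> admissible M B \<phi> r \<tau>" for Y'
    using admissibleD(1)[OF that] by (intro Bochner_Integration.integral_cong) (simp_all add: sobj_eq_Fobj)
  then show ?thesis
    unfolding argmax_set_def budget_problem.optimal_def[OF budget_problem_sobj]
      admissible_eq_budget_set[symmetric] by auto
qed

lemma Hset_mono:
  assumes "\<theta>1 < \<theta>2" "h1 \<in> Hset M B \<phi> r \<tau> \<alpha> k \<gamma> \<theta>1" "h2 \<in> Hset M B \<phi> r \<tau> \<alpha> k \<gamma> \<theta>2"
  shows "h1 \<le> h2"
proof -
  obtain Y1 Y2 where "Y1 \<in> argmax_set M B \<phi> r \<tau> \<alpha> k \<gamma> \<theta>1" "Y2 \<in> argmax_set M B \<phi> r \<tau> \<alpha> k \<gamma> \<theta>2"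
    and h: "h1 = (\<integral>\<omega>. Y1 \<omega> powr \<alpha> \<partial>M)" "h2 = (\<integral>\<omega>. Y2 \<omega> powr \<alpha> \<partial>M)"
    using assms by (auto simp: Hset_def)
  then show ?thesis
    unfolding h argmax_set_def
    by (intro maximizer_weight_mono[OF _ _ \<open>\<theta>1 < \<theta>2\<close>, where A = "admissible M B \<phi> r \<tau>"
        and J = "\<lambda>Y. \<integral>\<omega>. Fobj \<alpha> k \<gamma> 0 (Y \<omega>) \<partial>M" and h = "\<lambda>Y. \<integral>\<omega>. Y \<omega> powr \<alpha> \<partial>M"])
      (auto simp flip: integral_Fobj_split)
qed

lemma Hset_unique:
  assumes "theta_low \<alpha> k < \<theta>" "h1 \<in> Hset M B \<phi> r \<tau> \<alpha> k \<gamma> \<theta>" "h2 \<in> Hset M B \<phi> r \<tau> \<alpha> k \<gamma> \<theta>"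
  shows "h1 = h2"
proof -
  interpret budget_problem "sobj \<theta>" \<alpha> "1 + \<bar>\<theta>\<bar> + k" M N Z "1 + \<bar>\<theta>\<bar> + k * \<gamma> powr \<alpha>"
    by (rule budget_problem_sobj)
  obtain Y1 Y2 where Y: "optimal Y1" "optimal Y2"
    and h: "h1 = (\<integral>\<omega>. Y1 \<omega> powr \<alpha> \<partial>M)" "h2 = (\<integral>\<omega>. Y2 \<omega> powr \<alpha> \<partial>M)"
    using assms by (auto simp: Hset_def argmax_set_iff_optimal)
  have "AE \<omega> in M. Y1 \<omega> = Y2 \<omega>"
    using optimal_AE_unique[OF _ Y] sobj_global_max_unique assms(1) by (simp add: theta_low_eq)
  then have "AE \<omega> in M. Y1 \<omega> powr \<alpha> = Y2 \<omega> powr \<alpha>"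
    by (rule eventually_mono) simp
  moreover have "Y1 \<in> budget_set" "Y2 \<in> budget_set"
    using Y by (simp_all add: optimal_def)
  ultimately show ?thesis
    unfolding h by (intro integral_cong_AE) (auto dest: budget_setD(1))
qed

lemma Hset_below_theta_low:
  assumes "\<theta> < theta_low \<alpha> k" "h \<in> Hset M B \<phi> r \<tau> \<alpha> k \<gamma> \<theta>"
  shows "h = 0"
proof -
  obtain Y where Y: "Y \<in> admissible M B \<phi> r \<tau>"
    and max: "\<And>Y'. Y' \<in> admissible M B \<phi> r \<tau> \<Longrightarrow>
      (\<integral>\<omega>. Fobj \<alpha> k \<gamma> \<theta> (Y' \<omega>) \<partial>M) \<le> (\<integral>\<omega>. Fobj \<alpha> k \<gamma> \<theta> (Y \<omega>) \<partial>M)"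
    and h: "h = (\<integral>\<omega>. Y \<omega> powr \<alpha> \<partial>M)"
    using assms(2) by (auto simp: Hset_def argmax_set_def)
  note Y_nonneg = admissibleD(1)[OF Y]
  have "(\<lambda>\<omega>. 0) \<in> admissible M B \<phi> r \<tau>"
    by (simp add: admissible_def)
  from max[OF this] have "sobj \<theta> 0 \<le> (\<integral>\<omega>. Fobj \<alpha> k \<gamma> \<theta> (Y \<omega>) \<partial>M)"
    by (simp add: sobj_eq_Fobj prob_space)
  also have "\<dots> \<le> (\<integral>\<omega>. sobj \<theta> 0 + (\<theta> + c_hat) * Y \<omega> powr \<alpha> \<partial>M)"
    using admissibleD[OF Y] sobj_le_c_hat sobj_eq_Fobj by (intro integral_mono) auto
  also have "\<dots> = sobj \<theta> 0 + (\<theta> + c_hat) * h"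
    using admissibleD(2)[OF Y] by (simp add: h prob_space)
  finally have "0 \<le> (\<theta> + c_hat) * h"
    by simp
  moreover have "\<theta> + c_hat < 0"
    using assms(1) by (simp add: theta_low_eq)
  moreover have "0 \<le> h"
    unfolding h by (intro integral_nonneg_AE AE_I2) simp
  ultimately show ?thesis
    by (simp add: zero_le_mult_iff)
qed

end

theorem lemmaA2:
  fixes M :: "'a measure" and B :: "real \<Rightarrow> 'a \<Rightarrow> real"
    and \<mu> r \<sigma> \<tau> \<alpha> k \<gamma> :: real
  defines "\<phi> \<equiv> (\<mu> - r) / \<sigma>"
  assumes "std_brownian_motion M B"
    and "complete_measure M"
    and "\<sigma> > 0" and "\<phi> \<noteq> 0"
    and "\<tau> > 0" and "0 < \<alpha>" and "\<alpha> < 1" and "k \<ge> 0" and "\<gamma> > 0"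
  shows "(\<forall>\<theta>1 \<theta>2 h1 h2. theta_low \<alpha> k < \<theta>1 \<and> \<theta>1 \<le> \<theta>2
            \<and> h1 \<in> Hset M B \<phi> r \<tau> \<alpha> k \<gamma> \<theta>1 \<and> h2 \<in> Hset M B \<phi> r \<tau> \<alpha> k \<gamma> \<theta>2
            \<longrightarrow> h1 \<le> h2)
       \<and> (\<forall>\<theta> h. \<theta> < theta_low \<alpha> k \<and> h \<in> Hset M B \<phi> r \<tau> \<alpha> k \<gamma> \<theta> \<longrightarrow> h = 0)"
proof -
  interpret s_shaped_market \<alpha> k \<gamma> M B \<tau> \<phi> r
    by unfold_locales (use assms in auto)
  have "h1 \<le> h2" if "theta_low \<alpha> k < \<theta>1" "\<theta>1 \<le> \<theta>2"
    "h1 \<in> Hset M B \<phi> r \<tau> \<alpha> k \<gamma> \<theta>1" "h2 \<in> Hset M B \<phi> r \<tau> \<alpha> k \<gamma> \<theta>2" for \<theta>1 \<theta>2 h1 h2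
  proof (cases "\<theta>1 = \<theta>2")
    case True
    with that Hset_unique show ?thesis
      by (metis order_refl)
  next
    case False
    with that have "\<theta>1 < \<theta>2"
      by simp
    with that Hset_mono show ?thesis
      by blast
  qed
  then show ?thesis
    using Hset_below_theta_low by blast
qed

end
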